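(* Let $C=\{\beta=(\beta_1,\beta_2)\in[0,1]^2:\beta_1\le\beta_2\}$ and let $A\subseteq C$ satisfy: (i) $A$ is closed; (ii) $\{(b,b): b\in[0,1]\}\subseteq A$; (iii) for all $\beta\in A$ and all $\gamma\in C$, if $\beta_1\le\gamma_1\le\gamma_2\le\beta_2$ then $\gamma\in A$. Then there exists a function $\Delta:[0,1]\to[0,1]$ such that for all $\beta\in C$: $\beta\in A$ if and only if $\beta_2-\beta_1\le\Delta\big(\tfrac{\beta_1+\beta_2}{2}\big)$. *)

theory Defs
  imports "HOL-Analysis.Analysis"
begin

definition Cset :: "(real \<times> real) set" where
  "Cset = {(b1, b2). 0 \<le> b1 \<and> b1 \<le> b2 \<and> b2 \<le> 1}"

end

theory Submission
  imports Defs
begin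

text \<open>Parametrise a pair by its midpoint m and its width w, i.e. as (m - w/2, m + w/2).
  For fixed m the admissible widths form a closed set containing 0 and bounded by 1, so it
  contains its supremum \<Delta> m; the nesting hypothesis (iii) makes it the whole interval [0, \<Delta> m].\<close>

definition widths :: "(real \<times> real) set \<Rightarrow> real \<Rightarrow> real set" where
  "widths A m = {w. (m - w/2, m + w/2) \<in> A}"

lemma closed_widths:
  assumes "closed A"
  shows "closed (widths A m)"
proof -
  have "widths A m = (\<lambda>w. (m - w/2, m + w/2)) -` A"
    unfolding widths_def by auto
  also have "closed \<dots>"
    by (intro closed_vimage assms continuous_intros) auto
  finally show ?thesis .
qed

lemma widths_Cset_subset: "widths Cset m \<subseteq> {0..1}"
  unfolding widths_def Cset_def by auto

lemma widths_mono: "A \<subseteq> B \<Longrightarrow> widths A m \<subseteq> widths B m"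
  unfolding widths_def by auto

lemma bdd_above_widths: "A \<subseteq> Cset \<Longrightarrow> bdd_above (widths A m)"
  using widths_mono widths_Cset_subset bdd_above_Icc bdd_above_mono by metis

lemma Sup_widths_mem:
  assumes "closed A" "A \<subseteq> Cset" "(m, m) \<in> A"
  shows "Sup (widths A m) \<in> widths A m"
proof (rule closed_contains_Sup)
  show "widths A m \<noteq> {}"
  proof -
    have "0 \<in> widths A m"
      using assms(3) unfolding widths_def by simp
    then show ?thesis by blast
  qed
  show "bdd_above (widths A m)"
    using assms(2) by (rule bdd_above_widths)
qed (rule closed_widths[OF assms(1)])

lemma widths_downward_closed:
  assumes nested: "\<forall>\<beta>\<in>A. \<forall>\<gamma>\<in>Cset. fst \<beta> \<le> fst \<gamma> \<and> fst \<gamma> \<le> snd \<gamma> \<and> snd \<gamma> \<le> snd \<beta> \<longrightarrow> \<gamma> \<in> A"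
    and "v \<in> widths A m" "w \<le> v" "(m - w/2, m + w/2) \<in> Cset"
  shows "w \<in> widths A m"
proof -
  have "0 \<le> w"
    using assms(4) unfolding Cset_def by auto
  then show ?thesis
    using nested assms(2-4) unfolding widths_def by (fastforce simp: field_simps)
qed

lemma pair_eq_midpoint_width:
  fixes \<beta> :: "real \<times> real"
  defines "m \<equiv> (fst \<beta> + snd \<beta>) / 2" and "w \<equiv> snd \<beta> - fst \<beta>"
  shows "\<beta> = (m - w/2, m + w/2)"
  unfolding m_def w_def by (simp add: prod_eq_iff field_simps)

theorem lemma1:
  fixes A :: "(real \<times> real) set"
  assumes "A \<subseteq> Cset"
    and "closed A"
    and "\<forall>b\<in>{0..1}. (b, b) \<in> A"
    and "\<forall>\<beta>\<in>A. \<forall>\<gamma>\<in>Cset. fst \<beta> \<le> fst \<gamma> \<and> fst \<gamma> \<le> snd \<gamma> \<and> snd \<gamma> \<le> snd \<beta> \<longrightarrow> \<gamma> \<in> A"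
  shows "\<exists>\<Delta> :: real \<Rightarrow> real. (\<forall>x\<in>{0..1}. \<Delta> x \<in> {0..1}) \<and>
           (\<forall>\<beta>\<in>Cset. \<beta> \<in> A \<longleftrightarrow> snd \<beta> - fst \<beta> \<le> \<Delta> ((fst \<beta> + snd \<beta>) / 2))"
proof (intro exI[of _ "\<lambda>m. Sup (widths A m)"] conjI ballI)
  have Sup_mem: "Sup (widths A m) \<in> widths A m" if "m \<in> {0..1}" for m
    using Sup_widths_mem assms(1,2,3) that by blast
  have bounded: "widths A m \<subseteq> {0..1}" for m
    using widths_mono[OF assms(1)] widths_Cset_subset by blast
  show "Sup (widths A m) \<in> {0..1}" if "m \<in> {0..1}" for m
    using Sup_mem[OF that] bounded by blast
  fix \<beta> assume "\<beta> \<in> Cset"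
  define m where "m = (fst \<beta> + snd \<beta>) / 2"
  define w where "w = snd \<beta> - fst \<beta>"
  have \<beta>: "\<beta> = (m - w/2, m + w/2)"
    unfolding m_def w_def by (rule pair_eq_midpoint_width)
  have "m \<in> {0..1}"
    using \<open>\<beta> \<in> Cset\<close> unfolding m_def Cset_def by auto
  have "\<beta> \<in> A \<longleftrightarrow> w \<in> widths A m"
    by (subst \<beta>) (simp add: widths_def)
  also have "\<dots> \<longleftrightarrow> w \<le> Sup (widths A m)"
  proof
    assume "w \<in> widths A m"
    then show "w \<le> Sup (widths A m)"
      using bdd_above_widths[OF assms(1)] by (rule cSup_upper)
  next
    assume "w \<le> Sup (widths A m)"
    then show "w \<in> widths A m"
      using widths_downward_closed[OF assms(4) Sup_mem[OF \<open>m \<in> {0..1}\<close>]] \<open>\<beta> \<in> Cset\<close> \<beta>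
      by simp
  qed
  finally show "\<beta> \<in> A \<longleftrightarrow> snd \<beta> - fst \<beta> \<le> Sup (widths A ((fst \<beta> + snd \<beta>) / 2))"
    unfolding m_def w_def .
qed

end
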